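(* Let $\phi_n(x)=\sqrt{\tfrac{2n+1}{2}}\,P_n(x)$, $n\ge0$, be the orthonormal Legendre polynomials on $[-1,1]$, and consider separated Robin boundary conditions $a_+u(1)+b_+u'(1)=0$ and $a_-u(-1)+b_-u'(-1)=0$ with real constants satisfying $a_+b_+>0$ and $a_-b_-<0$. Set $b_{0,n}=a_+\phi_n(1)+b_+\phi_n'(1)$ and $b_{1,n}=a_-\phi_n(-1)+b_-\phi_n'(-1)$. Then there is a unique unit lower-triangular matrix $A=(a_{m,k})_{m,k\ge0}$ with lower bandwidth $2$ satisfying $b_{i,k}+b_{i,k+1}a_{k+1,k}+b_{i,k+2}a_{k+2,k}=0$ for $i=0,1$ and all $k\ge0$, and $A$ is a bounded operator on $\ell^2$.
   Context: $P_n$ is the Legendre polynomial of degree $n$ with the standard normalization $P_n(1)=1$. "Unit lower-triangular with lower bandwidth 2" means $a_{k,k}=1$ and $a_{m,k}=0$ unless $k\le m\le k+2$. $\ell^2$ is the space of square-summable sequences indexed from $0$. *)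

theory Defs
  imports "HOL-Analysis.Analysis" "HOL-Computational_Algebra.Polynomial"
begin

fun legendre :: "nat \<Rightarrow> real poly" where
  "legendre 0 = 1"
| "legendre (Suc 0) = [:0, 1:]"
| "legendre (Suc (Suc n)) =
     smult (1 / real (n + 2))
       (smult (real (2 * n + 3)) ([:0, 1:] * legendre (Suc n)) - smult (real (n + 1)) (legendre n))"

definition phi :: "nat \<Rightarrow> real \<Rightarrow> real" where
  "phi n x = sqrt ((2 * real n + 1) / 2) * poly (legendre n) x"

definition phi' :: "nat \<Rightarrow> real \<Rightarrow> real" where
  "phi' n x = sqrt ((2 * real n + 1) / 2) * poly (pderiv (legendre n)) x"

definition unit_lower_band2 :: "(nat \<Rightarrow> nat \<Rightarrow> real) \<Rightarrow> bool" where
  "unit_lower_band2 A \<longleftrightarrow> (\<forall>k. A k k = 1) \<and> (\<forall>m k. \<not> (k \<le> m \<and> m \<le> k + 2) \<longrightarrow> A m k = 0)"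

definition lt_apply :: "(nat \<Rightarrow> nat \<Rightarrow> real) \<Rightarrow> (nat \<Rightarrow> real) \<Rightarrow> nat \<Rightarrow> real" where
  "lt_apply A x m = (\<Sum>k\<le>m. A m k * x k)"

definition l2_bounded :: "(nat \<Rightarrow> nat \<Rightarrow> real) \<Rightarrow> bool" where
  "l2_bounded A \<longleftrightarrow> (\<exists>C. \<forall>x. summable (\<lambda>k. (x k)\<^sup>2) \<longrightarrow>
      summable (\<lambda>m. (lt_apply A x m)\<^sup>2) \<and>
      (\<Sum>m. (lt_apply A x m)\<^sup>2) \<le> C\<^sup>2 * (\<Sum>k. (x k)\<^sup>2))"

end

theory Submission imports Defs begin

text \<open>From \<open>P\<^sub>n(1) = 1\<close>, \<open>P\<^sub>n'(1) = n(n+1)/2\<close> and the parity of \<open>P\<^sub>n\<close>, the Robin coefficients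
  are \<open>b\<^sub>0\<^sub>n = sgn(a\<^sub>+) f\<^sub>n\<close> and \<open>b\<^sub>1\<^sub>n = sgn(a\<^sub>-) (-1)\<^sup>n g\<^sub>n\<close> with \<open>f, g\<close> positive and
  nondecreasing: the sign conditions \<open>a\<^sub>+b\<^sub>+ > 0\<close>, \<open>a\<^sub>-b\<^sub>- < 0\<close> are exactly what prevents
  cancellation between the value and the derivative term.  In column \<open>k\<close> the two boundary
  conditions are a 2\<times>2 system for \<open>a\<^sub>k\<^sub>+\<^sub>1\<^sub>,\<^sub>k\<close> and \<open>a\<^sub>k\<^sub>+\<^sub>2\<^sub>,\<^sub>k\<close> with determinant
  \<open>\<plusminus>(f\<^sub>k\<^sub>+\<^sub>1 g\<^sub>k\<^sub>+\<^sub>2 + f\<^sub>k\<^sub>+\<^sub>2 g\<^sub>k\<^sub>+\<^sub>1) \<noteq> 0\<close>, so \<open>A\<close> exists and is unique.  Because of the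
  alternating sign, Cramer's rule together with the monotonicity of \<open>f\<close> and \<open>g\<close> puts both
  unknowns in \<open>[-1, 1]\<close>, and a unit lower-triangular band matrix with bounded entries is
  bounded on \<open>\<ell>\<^sup>2\<close>.\<close>

lemma legendre_at_1:
  "poly (legendre n) 1 = 1 \<and> poly (pderiv (legendre n)) 1 = real n * (real n + 1) / 2"
proof (induction n rule: legendre.induct)
  case (3 n)
  then show ?case by (simp add: pderiv_diff pderiv_mult pderiv_smult pderiv_pCons field_simps)
qed (auto simp: pderiv_pCons)

lemma legendre_at_minus_1:
  "poly (legendre n) (-1) = (-1) ^ n \<and>
   poly (pderiv (legendre n)) (-1) = (-1) ^ (n + 1) * (real n * (real n + 1) / 2)"
proof (induction n rule: legendre.induct)
  case (3 n)
  then show ?case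
    by (simp add: pderiv_diff pderiv_mult pderiv_smult pderiv_pCons
        3(1)[THEN conjunct1] 3(1)[THEN conjunct2] 3(2)[THEN conjunct1] 3(2)[THEN conjunct2]
        del: power_Suc)
       (simp add: field_simps)
qed (auto simp: pderiv_pCons)

definition robin_weight :: "real \<Rightarrow> real \<Rightarrow> nat \<Rightarrow> real" where
  "robin_weight a c n = sqrt ((2 * real n + 1) / 2) * (a + c * (real n * (real n + 1) / 2))"

lemma robin_functional_at_1: "a * phi n 1 + c * phi' n 1 = robin_weight a c n"
  by (simp add: robin_weight_def phi_def phi'_def legendre_at_1[THEN conjunct1]
      legendre_at_1[THEN conjunct2] algebra_simps)

lemma robin_functional_at_minus_1:
  "a * phi n (-1) + c * phi' n (-1) = (-1) ^ n * robin_weight a (- c) n"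
  by (simp add: robin_weight_def phi_def phi'_def legendre_at_minus_1[THEN conjunct1]
      legendre_at_minus_1[THEN conjunct2] algebra_simps)

lemma robin_weight_sgn:
  assumes "0 < a * c"
  shows "robin_weight a c n = sgn a * robin_weight \<bar>a\<bar> \<bar>c\<bar> n"
proof -
  have affine: "a + c * t = sgn a * (\<bar>a\<bar> + \<bar>c\<bar> * t)" for t
    using assms by (auto simp: zero_less_mult_iff sgn_if algebra_simps)
  show ?thesis
    unfolding robin_weight_def affine by (rule mult.left_commute)
qed

lemma robin_weight_pos: "0 < a \<Longrightarrow> 0 \<le> c \<Longrightarrow> 0 < robin_weight a c n"
  by (simp add: robin_weight_def add_pos_nonneg)

lemma mono_robin_weight:
  assumes "0 < a" "0 \<le> c"
  shows "mono (robin_weight a c)"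
proof (rule monoI)
  fix m n :: nat
  assume "m \<le> n"
  then have "real m * (real m + 1) / 2 \<le> real n * (real n + 1) / 2"
    by (intro divide_right_mono mult_mono) auto
  with \<open>m \<le> n\<close> assms show "robin_weight a c m \<le> robin_weight a c n"
    unfolding robin_weight_def
    by (intro mult_mono add_left_mono mult_left_mono) (auto simp: add_pos_nonneg)
qed

lemma alternating_system_bound:
  fixes F0 F1 F2 G0 G1 G2 x y :: real
  assumes "0 < F0" "F0 \<le> F1" "F1 \<le> F2" "0 < G0" "G0 \<le> G1" "G1 \<le> G2"
    and eqF: "F0 + F1 * x + F2 * y = 0" and eqG: "G0 - G1 * x + G2 * y = 0"
  shows "\<bar>x\<bar> \<le> 1" and "\<bar>y\<bar> \<le> 1"
proof -
  define D where "D = F1 * G2 + G1 * F2"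
  have "0 < F1 * G2" "0 < G1 * F2" using assms by simp_all
  then have D_pos: "0 < D" by (simp add: D_def)
  have cramer_x: "x * D = G0 * F2 - F0 * G2"
    and cramer_y: "y * D = - (F0 * G1 + G0 * F1)"
    using eqF eqG unfolding D_def by algebra+
  have "G0 * F2 \<le> G1 * F2" "F0 * G2 \<le> F1 * G2" "F0 * G1 \<le> G1 * F2" "G0 * F1 \<le> F1 * G2"
    using assms by (simp_all add: mult_right_mono mult_left_mono)
  moreover have "0 < G0 * F2" "0 < F0 * G2" "0 < F0 * G1" "0 < G0 * F1"
    using assms by simp_all
  ultimately have "\<bar>x * D\<bar> \<le> 1 * D" and "\<bar>y * D\<bar> \<le> 1 * D"
    by (simp_all only: cramer_x cramer_y) (simp_all add: D_def)
  then show "\<bar>x\<bar> \<le> 1" and "\<bar>y\<bar> \<le> 1"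
    using D_pos by (simp_all add: abs_mult)
qed

lemma linear_2x2_solvable:
  fixes a b c d p q :: real
  assumes "a * d - b * c \<noteq> 0"
  shows "\<exists>x y. p + a * x + b * y = 0 \<and> q + c * x + d * y = 0"
  using assms
  by (intro exI[of _ "(b * q - d * p) / (a * d - b * c)"] exI[of _ "(c * p - a * q) / (a * d - b * c)"])
     (simp add: field_simps)

lemma linear_2x2_homogeneous:
  fixes a b c d x y :: real
  assumes "a * d - b * c \<noteq> 0" "a * x + b * y = 0" "c * x + d * y = 0"
  shows "x = 0" and "y = 0"
proof -
  have "(a * d - b * c) * x = 0" "(a * d - b * c) * y = 0"
    using assms(2,3) by algebra+
  then show "x = 0" and "y = 0" using assms(1) by simp_all
qed

definition band2 :: "(nat \<Rightarrow> real) \<Rightarrow> (nat \<Rightarrow> real) \<Rightarrow> nat \<Rightarrow> nat \<Rightarrow> real" where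
  "band2 X Y m k = (if m = k then 1 else if m = k + 1 then X k else if m = k + 2 then Y k else 0)"

lemma unit_lower_band2_band2: "unit_lower_band2 (band2 X Y)"
  by (auto simp: unit_lower_band2_def band2_def)

lemma unit_lower_band2_eqI:
  assumes "unit_lower_band2 A" "unit_lower_band2 B"
    and "\<And>k. A (k + 1) k = B (k + 1) k" "\<And>k. A (k + 2) k = B (k + 2) k"
  shows "A = B"
proof (intro ext)
  fix m k :: nat
  consider "m = k" | "m = k + 1" | "m = k + 2" | "\<not> (k \<le> m \<and> m \<le> k + 2)"
    by linarith
  then show "A m k = B m k"
  proof cases
    case 1 then show ?thesis using assms(1,2) by (simp add: unit_lower_band2_def)
  next
    case 2 then show ?thesis using assms(3) by simp
  next
    case 3 then show ?thesis using assms(4) by simp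
  next
    case 4 then show ?thesis using assms(1,2) by (simp add: unit_lower_band2_def)
  qed
qed

definition band2_boundary_eqs :: "(nat \<Rightarrow> nat \<Rightarrow> real) \<Rightarrow> (nat \<Rightarrow> nat \<Rightarrow> real) \<Rightarrow> bool" where
  "band2_boundary_eqs b A \<longleftrightarrow>
     (\<forall>i\<in>{0,1}. \<forall>k. b i k + b i (k + 1) * A (k + 1) k + b i (k + 2) * A (k + 2) k = 0)"

lemma unit_lower_band2_boundary_eqs_unique:
  fixes b :: "nat \<Rightarrow> nat \<Rightarrow> real"
  assumes det: "\<And>k. b 0 (k + 1) * b 1 (k + 2) - b 0 (k + 2) * b 1 (k + 1) \<noteq> 0"
    and A: "unit_lower_band2 A" "band2_boundary_eqs b A"
    and B: "unit_lower_band2 B" "band2_boundary_eqs b B"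
  shows "A = B"
proof -
  have diff: "b i (k + 1) * (A (k + 1) k - B (k + 1) k) + b i (k + 2) * (A (k + 2) k - B (k + 2) k) = 0"
    if "i \<in> {0, 1}" for i k
  proof -
    have "b i k + b i (k + 1) * A (k + 1) k + b i (k + 2) * A (k + 2) k = 0"
      and "b i k + b i (k + 1) * B (k + 1) k + b i (k + 2) * B (k + 2) k = 0"
      using A(2) B(2) that unfolding band2_boundary_eqs_def by blast+
    then show ?thesis unfolding right_diff_distrib by linarith
  qed
  have "A (k + 1) k - B (k + 1) k = 0" "A (k + 2) k - B (k + 2) k = 0" for k
    using linear_2x2_homogeneous[OF det diff[of 0 k] diff[of 1 k]] by simp_all
  then show ?thesis by (intro unit_lower_band2_eqI[OF A(1) B(1)]) simp_all
qed

lemma ex1_unit_lower_band2_boundary_eqs: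
  fixes b :: "nat \<Rightarrow> nat \<Rightarrow> real"
  assumes det: "\<And>k. b 0 (k + 1) * b 1 (k + 2) - b 0 (k + 2) * b 1 (k + 1) \<noteq> 0"
  shows "\<exists>!A. unit_lower_band2 A \<and> band2_boundary_eqs b A"
proof -
  have "\<forall>k. \<exists>x y. b 0 k + b 0 (k + 1) * x + b 0 (k + 2) * y = 0 \<and>
                 b 1 k + b 1 (k + 1) * x + b 1 (k + 2) * y = 0"
    by (intro allI linear_2x2_solvable det)
  then obtain X Y where
    "\<forall>k. b 0 k + b 0 (k + 1) * X k + b 0 (k + 2) * Y k = 0 \<and>
         b 1 k + b 1 (k + 1) * X k + b 1 (k + 2) * Y k = 0"
    by metis
  then have "unit_lower_band2 (band2 X Y) \<and> band2_boundary_eqs b (band2 X Y)"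
    by (simp add: unit_lower_band2_band2 band2_boundary_eqs_def band2_def)
  then show ?thesis
    using unit_lower_band2_boundary_eqs_unique[OF det] by blast
qed

lemma sums_delayed:
  fixes f :: "nat \<Rightarrow> 'a::real_normed_vector"
  assumes "f sums s"
  shows "(\<lambda>m. if j \<le> m then f (m - j) else 0) sums s"
proof -
  let ?g = "\<lambda>m. if j \<le> m then f (m - j) else 0"
  have "(\<lambda>i. ?g (i + j)) = f" by simp
  with assms sums_iff_shift[of ?g j s] show ?thesis by simp
qed

lemma lt_apply_unit_lower_band2:
  assumes "unit_lower_band2 A"
  shows "lt_apply A x m = A m m * x m + (if 1 \<le> m then A m (m - 1) * x (m - 1) else 0)
                             + (if 2 \<le> m then A m (m - 2) * x (m - 2) else 0)"
proof -
  have "lt_apply A x m = (\<Sum>k\<in>{m - 2..m}. A m k * x k)"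
    unfolding lt_apply_def
    using assms by (intro sum.mono_neutral_right) (auto simp: unit_lower_band2_def)
  also have "\<dots> = A m m * x m + (if 1 \<le> m then A m (m - 1) * x (m - 1) else 0)
                             + (if 2 \<le> m then A m (m - 2) * x (m - 2) else 0)"
  proof (cases "m < 2")
    case True
    then have "m = 0 \<or> m = 1" by auto
    then show ?thesis by auto
  next
    case False
    then obtain n where "m = Suc (Suc n)" by (metis add_2_eq_Suc le_Suc_ex not_less)
    then show ?thesis by (simp add: sum.cl_ivl_Suc algebra_simps)
  qed
  finally show ?thesis .
qed

lemma square_sum3_le: "(a + b + c)\<^sup>2 \<le> 3 * (a\<^sup>2 + b\<^sup>2 + c\<^sup>2)" for a b c :: real
proof -
  have "0 \<le> (a - b)\<^sup>2 + (b - c)\<^sup>2 + (a - c)\<^sup>2" by simp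
  then show ?thesis by (simp add: power2_eq_square algebra_simps)
qed

lemma unit_lower_band2_l2_bounded:
  assumes "unit_lower_band2 A" and bound: "\<And>m k. \<bar>A m k\<bar> \<le> M"
  shows "l2_bounded A"
  unfolding l2_bounded_def
proof (intro exI allI impI)
  fix x :: "nat \<Rightarrow> real"
  assume "summable (\<lambda>k. (x k)\<^sup>2)"
  define S where "S = (\<Sum>k. (x k)\<^sup>2)"
  have x: "(\<lambda>k. (x k)\<^sup>2) sums S"
    unfolding S_def by (rule summable_sums) fact
  define d where "d j m = (if j \<le> m then (x (m - j))\<^sup>2 else 0)" for j m
  have d: "d j sums S" for j
    unfolding d_def by (rule sums_delayed[OF x])
  have entry: "(A m k * y)\<^sup>2 \<le> M\<^sup>2 * y\<^sup>2" for m k y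
    using bound[of m k] abs_le_square_iff[of "A m k" M]
    by (simp add: power_mult_distrib mult_right_mono)
  have row: "(lt_apply A x m)\<^sup>2 \<le> 3 * M\<^sup>2 * (d 0 m + d 1 m + d 2 m)" for m
  proof -
    have "(lt_apply A x m)\<^sup>2 \<le> 3 * ((A m m * x m)\<^sup>2 + (if 1 \<le> m then A m (m - 1) * x (m - 1) else 0)\<^sup>2
                                      + (if 2 \<le> m then A m (m - 2) * x (m - 2) else 0)\<^sup>2)"
      unfolding lt_apply_unit_lower_band2[OF assms(1)] by (rule square_sum3_le)
    also have "\<dots> \<le> 3 * M\<^sup>2 * (d 0 m + d 1 m + d 2 m)"
      using entry[of m m "x m"] entry[of m "m - 1" "x (m - 1)"] entry[of m "m - 2" "x (m - 2)"]
      unfolding d_def by (auto simp: algebra_simps)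
    finally show ?thesis .
  qed
  define g where "g m = 3 * M\<^sup>2 * (d 0 m + d 1 m + d 2 m)" for m
  have "g sums (3 * M\<^sup>2 * (S + S + S))"
    unfolding g_def by (intro sums_mult sums_add d)
  then have g: "g sums ((3 * M)\<^sup>2 * S)"
    by (simp add: power_mult_distrib mult.assoc)
  have summable: "summable (\<lambda>m. (lt_apply A x m)\<^sup>2)"
    using row by (intro summable_comparison_test'[OF sums_summable[OF g]]) (simp add: g_def)
  moreover have "(\<Sum>m. (lt_apply A x m)\<^sup>2) \<le> (3 * M)\<^sup>2 * S"
    using suminf_le[OF _ summable sums_summable[OF g]] row g by (simp add: g_def sums_iff)
  ultimately show "summable (\<lambda>m. (lt_apply A x m)\<^sup>2) \<and>
      (\<Sum>m. (lt_apply A x m)\<^sup>2) \<le> (3 * M)\<^sup>2 * (\<Sum>k. (x k)\<^sup>2)"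
    by (simp add: S_def)
qed

lemma alternating_boundary_band2_bounded:
  fixes b :: "nat \<Rightarrow> nat \<Rightarrow> real" and f g :: "nat \<Rightarrow> real"
  assumes f: "\<And>n. 0 < f n" "mono f" and g: "\<And>n. 0 < g n" "mono g"
    and "\<sigma> \<noteq> 0" "\<tau> \<noteq> 0"
    and b0: "\<And>n. b 0 n = \<sigma> * f n" and b1: "\<And>n. b 1 n = \<tau> * (-1) ^ n * g n"
    and A: "unit_lower_band2 A" "band2_boundary_eqs b A"
  shows "\<bar>A m k\<bar> \<le> 1"
proof -
  let ?x = "A (k + 1) k" and ?y = "A (k + 2) k"
  have "b 0 k + b 0 (k + 1) * ?x + b 0 (k + 2) * ?y = 0"
    and "b 1 k + b 1 (k + 1) * ?x + b 1 (k + 2) * ?y = 0"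
    using A(2) unfolding band2_boundary_eqs_def by blast+
  then have "\<sigma> * (f k + f (k + 1) * ?x + f (k + 2) * ?y) = 0"
    and "(\<tau> * (-1) ^ k) * (g k - g (k + 1) * ?x + g (k + 2) * ?y) = 0"
    by (simp_all add: b0 b1 b1[unfolded One_nat_def] algebra_simps)
  then have "f k + f (k + 1) * ?x + f (k + 2) * ?y = 0"
    and "g k - g (k + 1) * ?x + g (k + 2) * ?y = 0"
    using \<open>\<sigma> \<noteq> 0\<close> \<open>\<tau> \<noteq> 0\<close> by simp_all
  then have "\<bar>?x\<bar> \<le> 1" and "\<bar>?y\<bar> \<le> 1"
    using f g by (intro alternating_system_bound; simp add: monoD)+
  consider "m = k" | "m = k + 1" | "m = k + 2" | "\<not> (k \<le> m \<and> m \<le> k + 2)"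
    by linarith
  then show ?thesis
  proof cases
    case 1 then show ?thesis using A(1) by (simp add: unit_lower_band2_def)
  next
    case 2 then show ?thesis using \<open>\<bar>?x\<bar> \<le> 1\<close> by simp
  next
    case 3 then show ?thesis using \<open>\<bar>?y\<bar> \<le> 1\<close> by simp
  next
    case 4 then show ?thesis using A(1) by (simp add: unit_lower_band2_def)
  qed
qed

lemma alternating_boundary_band2:
  fixes b :: "nat \<Rightarrow> nat \<Rightarrow> real" and f g :: "nat \<Rightarrow> real"
  assumes f: "\<And>n. 0 < f n" "mono f" and g: "\<And>n. 0 < g n" "mono g"
    and "\<sigma> \<noteq> 0" "\<tau> \<noteq> 0"
    and b0: "\<And>n. b 0 n = \<sigma> * f n" and b1: "\<And>n. b 1 n = \<tau> * (-1) ^ n * g n"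
  shows "(\<exists>!A. unit_lower_band2 A \<and> band2_boundary_eqs b A)"
    and "unit_lower_band2 A \<Longrightarrow> band2_boundary_eqs b A \<Longrightarrow> l2_bounded A"
proof -
  have "b 0 (k + 1) * b 1 (k + 2) - b 0 (k + 2) * b 1 (k + 1) \<noteq> 0" for k
  proof -
    have "b 0 (k + 1) * b 1 (k + 2) - b 0 (k + 2) * b 1 (k + 1) =
          \<sigma> * \<tau> * (-1) ^ k * (f (k + 1) * g (k + 2) + f (k + 2) * g (k + 1))"
      by (simp add: b0 b1 b1[unfolded One_nat_def] algebra_simps)
    moreover have "0 < f (k + 1) * g (k + 2) + f (k + 2) * g (k + 1)"
      using f g by (simp add: add_pos_pos)
    ultimately show ?thesis using \<open>\<sigma> \<noteq> 0\<close> \<open>\<tau> \<noteq> 0\<close> by simp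
  qed
  then show "\<exists>!A. unit_lower_band2 A \<and> band2_boundary_eqs b A"
    by (rule ex1_unit_lower_band2_boundary_eqs)
  show "l2_bounded A" if "unit_lower_band2 A" "band2_boundary_eqs b A"
    using that alternating_boundary_band2_bounded[OF assms]
    by (intro unit_lower_band2_l2_bounded[where M = 1])
qed

theorem mainTheorem2:
  fixes ap bp am bm :: real and b :: "nat \<Rightarrow> nat \<Rightarrow> real"
  assumes "ap * bp > 0" and "am * bm < 0"
    and "\<And>n. b 0 n = ap * phi n 1 + bp * phi' n 1"
    and "\<And>n. b 1 n = am * phi n (-1) + bm * phi' n (-1)"
  defines "P \<equiv> \<lambda>A. unit_lower_band2 A \<and>
      (\<forall>i\<in>{0,1}. \<forall>k. b i k + b i (k+1) * A (k+1) k + b i (k+2) * A (k+2) k = 0)"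
  shows "(\<exists>!A. P A) \<and> (\<forall>A. P A \<longrightarrow> l2_bounded A)"
proof -
  have ab: "ap \<noteq> 0" "am \<noteq> 0" "sgn ap \<noteq> 0" "sgn am \<noteq> 0"
    using assms(1,2) by (auto simp: sgn_0_0)
  have b0: "b 0 n = sgn ap * robin_weight \<bar>ap\<bar> \<bar>bp\<bar> n" for n
    using assms(1,3) by (simp add: robin_functional_at_1 robin_weight_sgn)
  have b1: "b 1 n = sgn am * (-1) ^ n * robin_weight \<bar>am\<bar> \<bar>bm\<bar> n" for n
    using assms(2,4) robin_weight_sgn[of am "- bm" n]
    by (simp add: robin_functional_at_minus_1 mult_less_0_iff)
  have w: "0 < robin_weight \<bar>a\<bar> \<bar>c\<bar> n" "mono (robin_weight \<bar>a\<bar> \<bar>c\<bar>)"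
    if "a \<noteq> 0" for a c n
    using that by (simp_all add: robin_weight_pos mono_robin_weight)
  note band = alternating_boundary_band2[OF w[OF ab(1)] w[OF ab(2)] ab(3,4) b0 b1]
  have "P = (\<lambda>A. unit_lower_band2 A \<and> band2_boundary_eqs b A)"
    unfolding P_def band2_boundary_eqs_def ..
  then show ?thesis using band by auto
qed

end
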